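(* Let $k\ge 3$ and let $p,p'$ be two POPs of size $k$ having the same set $I$ of isolated vertices, with $k-2,k-1,k\notin I$. Suppose that in both $p$ and $p'$, each of the labels $k-1$ and $k$ is greater than every label $x\in[k-2]\setminus I$. Suppose that the subposets of $p$ and $p'$ induced by $[k-2]\setminus I$ coincide, and that $k<_p k-1$ while $k-1<_{p'}k$. Then $p\sim p'$.
   Context: A partially ordered pattern (POP) $p$ of size $k$ is a partial order $\le_p$ on $[k]=\{1,\dots,k\}$. A permutation $\pi=\pi_1\cdots\pi_n$ contains $p$ if there are indices $i_1<\dots<i_k$ with $\pi_{i_j}<\pi_{i_m}$ whenever $j<_p m$; otherwise it avoids $p$. $\mathfrak S_n(p)$ is the set of permutations of $[n]$ avoiding $p$, and $p\sim q$ (Wilf-equivalence) means $|\mathfrak S_n(p)|=|\mathfrak S_n(q)|$ for all $n\ge 1$. A vertex is isolated if it is comparable to no other vertex. *)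

theory Defs
  imports "HOL-Combinatorics.Permutations"
begin

text \<open>A POP of size k is given by its strict order relation lt (j <_p m) on [k] = {1..k}.\<close>
definition is_pop :: "nat \<Rightarrow> (nat \<Rightarrow> nat \<Rightarrow> bool) \<Rightarrow> bool" where
  "is_pop k lt \<longleftrightarrow>
     (\<forall>a b. lt a b \<longrightarrow> a \<in> {1..k} \<and> b \<in> {1..k}) \<and>
     (\<forall>a. \<not> lt a a) \<and>
     (\<forall>a b c. lt a b \<longrightarrow> lt b c \<longrightarrow> lt a c)"

definition pop_contains :: "nat \<Rightarrow> (nat \<Rightarrow> nat) \<Rightarrow> nat \<Rightarrow> (nat \<Rightarrow> nat \<Rightarrow> bool) \<Rightarrow> bool" where
  "pop_contains n pi k lt \<longleftrightarrow>
     (\<exists>i :: nat \<Rightarrow> nat. strict_mono_on {1..k} i \<and> i ` {1..k} \<subseteq> {1..n} \<and>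
        (\<forall>j m. lt j m \<longrightarrow> pi (i j) < pi (i m)))"

definition pop_avoiders :: "nat \<Rightarrow> nat \<Rightarrow> (nat \<Rightarrow> nat \<Rightarrow> bool) \<Rightarrow> (nat \<Rightarrow> nat) set" where
  "pop_avoiders n k lt = {pi. pi permutes {1..n} \<and> \<not> pop_contains n pi k lt}"

definition wilf_equiv :: "nat \<Rightarrow> (nat \<Rightarrow> nat \<Rightarrow> bool) \<Rightarrow> (nat \<Rightarrow> nat \<Rightarrow> bool) \<Rightarrow> bool" where
  "wilf_equiv k p q \<longleftrightarrow> (\<forall>n\<ge>1. card (pop_avoiders n k p) = card (pop_avoiders n k q))"

definition isolated :: "nat \<Rightarrow> (nat \<Rightarrow> nat \<Rightarrow> bool) \<Rightarrow> nat set" where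
  "isolated k lt = {x \<in> {1..k}. \<forall>y. \<not> lt x y \<and> \<not> lt y x}"

end

theory Submission
  imports Defs
begin

text \<open>
  Write G \<pi> a v when the letters 1..k-2 of p occur in \<pi> strictly left of position a, with
  every entry below k smaller than v.  Since the letters of [k-2] that are not isolated lie
  below both k-1 and k, \<pi> contains p iff G \<pi> a (\<pi> b) for some a < b with \<pi> b < \<pi> a,
  and contains p' iff G \<pi> a (\<pi> a) for some a < b with \<pi> a < \<pi> b.

  Call a active when G \<pi> a (\<pi> a).  Redistributing the values at the active positions so
  that each active a still satisfies G \<pi> a (new value) does not change G; this
  partitions the permutations into classes.  In every class the permutation maximising
  \<Sum> i * \<pi> i avoids p and the one minimising it avoids p', since a swap would move the
  weight the wrong way; comparing two class members at their first difference shows that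
  both are unique.  So both avoider sets are equinumerous with the set of classes.
\<close>

section \<open>Guarded inversions and ascents within classes of permutations\<close>

lemma permutes_first_difference_later:
  fixes \<sigma> \<tau> :: "nat \<Rightarrow> nat"
  assumes \<sigma>: "\<sigma> permutes {1..n}" and \<tau>: "\<tau> permutes {1..n}"
    and agree: "\<forall>c < a. \<sigma> c = \<tau> c" and "\<sigma> a \<noteq> \<tau> a"
  obtains b where "a < b" "b \<le> n" "\<tau> b = \<sigma> a"
proof -
  have "a \<in> {1..n}"
    using assms(4) permutes_not_in[OF \<sigma>] permutes_not_in[OF \<tau>] by metis
  then obtain b where b: "b \<in> {1..n}" "\<tau> b = \<sigma> a"
    using permutes_in_image[OF \<sigma>] permutes_image[OF \<tau>] by (metis imageE)
  have "b \<noteq> a" using b(2) assms(4) by auto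
  moreover have "\<not> b < a"
  proof
    assume "b < a"
    then have "\<sigma> b = \<sigma> a" using agree b(2) by simp
    with \<open>b \<noteq> a\<close> show False using permutes_inj[OF \<sigma>] by (auto dest: injD)
  qed
  ultimately have "a < b" by simp
  with b show ?thesis using that by simp
qed

lemma rearrangement_less:
  fixes a b u v :: nat
  assumes "a < b" "v < u"
  shows "a * u + b * v < a * v + b * u"
proof -
  obtain d e where "b = a + d" "u = v + e" "0 < d" "0 < e"
    using assms by (metis less_imp_add_positive)
  then show ?thesis by (simp add: algebra_simps)
qed

locale monotone_guard =
  fixes n :: nat and G :: "(nat \<Rightarrow> nat) \<Rightarrow> nat \<Rightarrow> nat \<Rightarrow> bool"
  assumes guard_mono: "G \<pi> a v \<Longrightarrow> a \<le> a' \<Longrightarrow> v \<le> v' \<Longrightarrow> G \<pi> a' v'"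
begin

definition active :: "(nat \<Rightarrow> nat) \<Rightarrow> nat set" where
  "active \<pi> = {a \<in> {1..n}. G \<pi> a (\<pi> a)}"

definition guard_class :: "(nat \<Rightarrow> nat) \<Rightarrow> (nat \<Rightarrow> nat) set" where
  "guard_class \<pi> = {\<tau>. \<tau> permutes {1..n} \<and> (\<forall>a \<in> {1..n} - active \<pi>. \<tau> a = \<pi> a) \<and>
     (\<forall>a \<in> active \<pi>. G \<pi> a (\<tau> a))}"

definition guarded_pair :: "(nat \<Rightarrow> nat) \<Rightarrow> nat \<Rightarrow> nat \<Rightarrow> bool" where
  "guarded_pair \<pi> a b \<longleftrightarrow> 1 \<le> a \<and> a < b \<and> b \<le> n \<and> G \<pi> a (min (\<pi> a) (\<pi> b))"

definition guarded_inversion :: "(nat \<Rightarrow> nat) \<Rightarrow> bool" where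
  "guarded_inversion \<pi> \<longleftrightarrow> (\<exists>a b. guarded_pair \<pi> a b \<and> \<pi> b < \<pi> a)"

definition guarded_ascent :: "(nat \<Rightarrow> nat) \<Rightarrow> bool" where
  "guarded_ascent \<pi> \<longleftrightarrow> (\<exists>a b. guarded_pair \<pi> a b \<and> \<pi> a < \<pi> b)"

definition weight :: "(nat \<Rightarrow> nat) \<Rightarrow> nat" where
  "weight \<sigma> = (\<Sum>i \<in> {1..n}. i * \<sigma> i)"

lemma guard_class_permutes: "\<tau> \<in> guard_class \<pi> \<Longrightarrow> \<tau> permutes {1..n}"
  by (simp add: guard_class_def)

lemma guard_class_refl: "\<pi> permutes {1..n} \<Longrightarrow> \<pi> \<in> guard_class \<pi>"
  by (simp add: guard_class_def active_def)

lemma finite_guard_class: "finite (guard_class \<pi>)"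
  by (rule finite_subset[OF _ finite_permutations[of "{1..n}"]]) (auto simp: guard_class_def)

lemma guard_class_swap:
  assumes "\<sigma> \<in> guard_class \<pi>" "a \<in> active \<pi>" "b \<in> active \<pi>"
    and "G \<pi> a (\<sigma> b)" "G \<pi> b (\<sigma> a)"
  shows "\<sigma> \<circ> transpose a b \<in> guard_class \<pi>"
proof -
  have "a \<in> {1..n}" "b \<in> {1..n}" using assms(2,3) by (auto simp: active_def)
  then have "\<sigma> \<circ> transpose a b permutes {1..n}"
    using assms(1) by (intro permutes_compose permutes_swap_id) (auto simp: guard_class_def)
  with assms show ?thesis by (auto simp: guard_class_def transpose_def)
qed

lemma weight_swap:
  assumes "a \<in> {1..n}" "b \<in> {1..n}" "a \<noteq> b"
  shows "weight (\<sigma> \<circ> transpose a b) + (a * \<sigma> a + b * \<sigma> b) = weight \<sigma> + (a * \<sigma> b + b * \<sigma> a)"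
proof -
  let ?R = "{1..n} - {a, b}"
  have split: "weight \<tau> = a * \<tau> a + b * \<tau> b + (\<Sum>i \<in> ?R. i * \<tau> i)" for \<tau>
    using assms sum.remove[of "{1..n}" a "\<lambda>i. i * \<tau> i"]
      sum.remove[of "{1..n} - {a}" b "\<lambda>i. i * \<tau> i"]
    unfolding weight_def by (simp add: insert_commute Diff_insert2 [symmetric])
  have "(\<Sum>i \<in> ?R. i * (\<sigma> \<circ> transpose a b) i) = (\<Sum>i \<in> ?R. i * \<sigma> i)"
    by (rule sum.cong) auto
  then show ?thesis using assms(3) by (simp add: split)
qed

end

locale class_invariant_guard = monotone_guard +
  assumes guard_class_invariant: "\<tau> \<in> guard_class \<pi> \<Longrightarrow> G \<tau> = G \<pi>"
begin

lemma active_class_invariant: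
  assumes "\<tau> \<in> guard_class \<pi>"
  shows "active \<tau> = active \<pi>"
proof (intro set_eqI)
  fix a
  have "G \<tau> = G \<pi>" by (rule guard_class_invariant[OF assms])
  then show "a \<in> active \<tau> \<longleftrightarrow> a \<in> active \<pi>"
    using assms by (cases "a \<in> active \<pi>") (auto simp: active_def guard_class_def)
qed

lemma guard_class_eq:
  assumes "\<tau> \<in> guard_class \<pi>"
  shows "guard_class \<tau> = guard_class \<pi>"
proof -
  have "\<forall>a \<in> {1..n} - active \<pi>. \<tau> a = \<pi> a"
    using assms by (simp add: guard_class_def)
  then show ?thesis
    unfolding guard_class_def active_class_invariant[OF assms] guard_class_invariant[OF assms]
    by (intro Collect_cong) auto
qed

lemma guarded_pair_swap:
  assumes \<sigma>: "\<sigma> \<in> guard_class \<pi>" and "guarded_pair \<sigma> a b"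
  shows "\<sigma> \<circ> transpose a b \<in> guard_class \<pi>"
proof -
  have G_eq: "G \<sigma> = G \<pi>" by (rule guard_class_invariant[OF \<sigma>])
  have ab: "a \<in> {1..n}" "b \<in> {1..n}" "a \<le> b" and G_min: "G \<pi> a (min (\<sigma> a) (\<sigma> b))"
    using assms(2) G_eq by (auto simp: guarded_pair_def)
  have Ga: "G \<pi> a (\<sigma> a)" "G \<pi> a (\<sigma> b)"
    using guard_mono[OF G_min order_refl] by simp_all
  have Gb: "G \<pi> b (\<sigma> a)" "G \<pi> b (\<sigma> b)"
    using guard_mono[OF G_min \<open>a \<le> b\<close>] by simp_all
  have "a \<in> active \<sigma>" "b \<in> active \<sigma>"
    using ab Ga(1) Gb(2) by (simp_all add: active_def G_eq)
  then have "a \<in> active \<pi>" "b \<in> active \<pi>"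
    unfolding active_class_invariant[OF \<sigma>] .
  then show ?thesis using guard_class_swap[OF \<sigma>] Ga(2) Gb(1) by blast
qed

lemma max_weight_no_guarded_inversion:
  assumes "\<sigma> \<in> guard_class \<pi>" "\<forall>\<tau> \<in> guard_class \<pi>. weight \<tau> \<le> weight \<sigma>"
  shows "\<not> guarded_inversion \<sigma>"
proof
  assume "guarded_inversion \<sigma>"
  then obtain a b where ab: "guarded_pair \<sigma> a b" "\<sigma> b < \<sigma> a"
    by (auto simp: guarded_inversion_def)
  then have "a \<in> {1..n}" "b \<in> {1..n}" "a < b" by (auto simp: guarded_pair_def)
  then have "weight \<sigma> < weight (\<sigma> \<circ> transpose a b)"
    using weight_swap[of a b \<sigma>] rearrangement_less[of a b "\<sigma> b" "\<sigma> a"] ab(2) by simp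
  with assms guarded_pair_swap[OF assms(1) ab(1)] show False by force
qed

lemma min_weight_no_guarded_ascent:
  assumes "\<sigma> \<in> guard_class \<pi>" "\<forall>\<tau> \<in> guard_class \<pi>. weight \<sigma> \<le> weight \<tau>"
  shows "\<not> guarded_ascent \<sigma>"
proof
  assume "guarded_ascent \<sigma>"
  then obtain a b where ab: "guarded_pair \<sigma> a b" "\<sigma> a < \<sigma> b"
    by (auto simp: guarded_ascent_def)
  then have "a \<in> {1..n}" "b \<in> {1..n}" "a < b" by (auto simp: guarded_pair_def)
  then have "weight (\<sigma> \<circ> transpose a b) < weight \<sigma>"
    using weight_swap[of a b \<sigma>] rearrangement_less[of a b "\<sigma> a" "\<sigma> b"] ab(2) by simp
  with assms guarded_pair_swap[OF assms(1) ab(1)] show False by force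
qed

lemma ex_guard_class_no_guarded_inversion:
  assumes "\<pi> permutes {1..n}"
  shows "\<exists>\<sigma> \<in> guard_class \<pi>. \<not> guarded_inversion \<sigma>"
proof -
  let ?W = "weight ` guard_class \<pi>"
  have fin: "finite ?W" and ne: "?W \<noteq> {}"
    using finite_guard_class guard_class_refl[OF assms] by auto
  obtain \<sigma> where \<sigma>: "\<sigma> \<in> guard_class \<pi>" "weight \<sigma> = Max ?W"
    using Max_in[OF fin ne] by (metis imageE)
  have "\<forall>\<tau> \<in> guard_class \<pi>. weight \<tau> \<le> weight \<sigma>"
    unfolding \<sigma>(2) using Max_ge[OF fin] by blast
  with \<sigma>(1) show ?thesis using max_weight_no_guarded_inversion by blast
qed

lemma ex_guard_class_no_guarded_ascent:
  assumes "\<pi> permutes {1..n}"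
  shows "\<exists>\<sigma> \<in> guard_class \<pi>. \<not> guarded_ascent \<sigma>"
proof -
  let ?W = "weight ` guard_class \<pi>"
  have fin: "finite ?W" and ne: "?W \<noteq> {}"
    using finite_guard_class guard_class_refl[OF assms] by auto
  obtain \<sigma> where \<sigma>: "\<sigma> \<in> guard_class \<pi>" "weight \<sigma> = Min ?W"
    using Min_in[OF fin ne] by (metis imageE)
  have "\<forall>\<tau> \<in> guard_class \<pi>. weight \<sigma> \<le> weight \<tau>"
    unfolding \<sigma>(2) using Min_le[OF fin] by blast
  with \<sigma>(1) show ?thesis using min_weight_no_guarded_ascent by blast
qed

lemma first_difference_guarded:
  assumes \<sigma>: "\<sigma> \<in> guard_class \<pi>" and \<tau>: "\<tau> \<in> guard_class \<pi>"
    and agree: "\<forall>c < a. \<sigma> c = \<tau> c" and less: "\<sigma> a < \<tau> a"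
  shows "guarded_inversion \<tau> \<and> guarded_ascent \<sigma>"
proof -
  have perms: "\<sigma> permutes {1..n}" "\<tau> permutes {1..n}"
    using \<sigma> \<tau> guard_class_permutes by blast+
  have "a \<in> active \<pi>"
  proof (rule ccontr)
    assume "a \<notin> active \<pi>"
    have "\<sigma> a = \<tau> a"
    proof (cases "a \<in> {1..n}")
      case True
      with \<open>a \<notin> active \<pi>\<close> \<sigma> \<tau> show ?thesis by (simp add: guard_class_def)
    next
      case False
      then show ?thesis by (simp add: permutes_not_in[OF perms(1)] permutes_not_in[OF perms(2)])
    qed
    with less show False by simp
  qed
  then have a: "1 \<le> a" and G: "G \<pi> a (\<sigma> a)"
    using \<sigma> by (simp_all add: active_def guard_class_def)
  obtain b where b: "a < b" "b \<le> n" "\<tau> b = \<sigma> a"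
    by (rule permutes_first_difference_later[OF perms agree less_imp_neq[OF less]])
  obtain b' where b': "a < b'" "b' \<le> n" "\<sigma> b' = \<tau> a"
  proof (rule permutes_first_difference_later[OF perms(2,1)])
    show "\<forall>c < a. \<tau> c = \<sigma> c" "\<tau> a \<noteq> \<sigma> a" using agree less by simp_all
  qed
  have "guarded_pair \<tau> a b \<and> \<tau> b < \<tau> a"
    using a b less G by (simp add: guarded_pair_def guard_class_invariant[OF \<tau>])
  moreover have "guarded_pair \<sigma> a b' \<and> \<sigma> a < \<sigma> b'"
    using a b' less G by (simp add: guarded_pair_def guard_class_invariant[OF \<sigma>])
  ultimately show ?thesis unfolding guarded_inversion_def guarded_ascent_def by blast
qed

lemma guard_class_distinct:
  assumes "\<sigma> \<in> guard_class \<pi>" "\<tau> \<in> guard_class \<pi>" "\<sigma> \<noteq> \<tau>"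
  shows "(guarded_inversion \<tau> \<and> guarded_ascent \<sigma>) \<or> (guarded_inversion \<sigma> \<and> guarded_ascent \<tau>)"
proof -
  obtain a where "\<sigma> a \<noteq> \<tau> a" "\<forall>c < a. \<sigma> c = \<tau> c"
    using assms(3) exists_least_iff[of "\<lambda>a. \<sigma> a \<noteq> \<tau> a"] by auto
  then consider "\<sigma> a < \<tau> a" "\<forall>c < a. \<sigma> c = \<tau> c" | "\<tau> a < \<sigma> a" "\<forall>c < a. \<tau> c = \<sigma> c"
    by fastforce
  then show ?thesis
    by cases (use first_difference_guarded assms(1,2) in blast)+
qed

lemma ex1_guard_class_no_guarded_inversion:
  "\<pi> permutes {1..n} \<Longrightarrow> \<exists>!\<sigma>. \<sigma> \<in> guard_class \<pi> \<and> \<not> guarded_inversion \<sigma>"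
  using ex_guard_class_no_guarded_inversion guard_class_distinct by blast

lemma ex1_guard_class_no_guarded_ascent:
  "\<pi> permutes {1..n} \<Longrightarrow> \<exists>!\<sigma>. \<sigma> \<in> guard_class \<pi> \<and> \<not> guarded_ascent \<sigma>"
  using ex_guard_class_no_guarded_ascent guard_class_distinct by blast

lemma card_eq_card_guard_classes:
  assumes unique: "\<And>\<pi>. \<pi> permutes {1..n} \<Longrightarrow> \<exists>!\<sigma>. \<sigma> \<in> guard_class \<pi> \<and> P \<sigma>"
  shows "card {\<pi>. \<pi> permutes {1..n} \<and> P \<pi>} = card (guard_class ` {\<pi>. \<pi> permutes {1..n}})"
proof (rule bij_betw_same_card, unfold bij_betw_def, intro conjI)
  show "inj_on guard_class {\<pi>. \<pi> permutes {1..n} \<and> P \<pi>}"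
  proof (rule inj_onI)
    fix \<sigma> \<tau>
    assume "\<sigma> \<in> {\<pi>. \<pi> permutes {1..n} \<and> P \<pi>}" "\<tau> \<in> {\<pi>. \<pi> permutes {1..n} \<and> P \<pi>}"
      and "guard_class \<sigma> = guard_class \<tau>"
    then show "\<sigma> = \<tau>" using unique guard_class_refl by blast
  qed
  have "guard_class \<pi> \<in> guard_class ` {\<pi>. \<pi> permutes {1..n} \<and> P \<pi>}"
    if \<pi>: "\<pi> permutes {1..n}" for \<pi>
  proof -
    obtain \<sigma> where "\<sigma> \<in> guard_class \<pi>" "P \<sigma>" using unique[OF \<pi>] by blast
    then show ?thesis using guard_class_eq guard_class_permutes by blast
  qed
  then show "guard_class ` {\<pi>. \<pi> permutes {1..n} \<and> P \<pi>} = guard_class ` {\<pi>. \<pi> permutes {1..n}}"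
    by blast
qed

theorem card_no_guarded_inversion_eq_card_no_guarded_ascent:
  "card {\<pi>. \<pi> permutes {1..n} \<and> \<not> guarded_inversion \<pi>} =
   card {\<pi>. \<pi> permutes {1..n} \<and> \<not> guarded_ascent \<pi>}"
  using card_eq_card_guard_classes[OF ex1_guard_class_no_guarded_inversion]
    card_eq_card_guard_classes[OF ex1_guard_class_no_guarded_ascent] by simp

end

section \<open>Occurrences of a POP through an occurrence of its first k - 2 letters\<close>

definition prefix_embedding ::
  "nat \<Rightarrow> (nat \<Rightarrow> nat \<Rightarrow> bool) \<Rightarrow> nat \<Rightarrow> (nat \<Rightarrow> nat) \<Rightarrow> nat \<Rightarrow> nat \<Rightarrow> (nat \<Rightarrow> nat) \<Rightarrow> bool"
where
  "prefix_embedding k q n \<pi> a v i \<longleftrightarrow>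
     strict_mono_on {1..k-2} i \<and> i ` {1..k-2} \<subseteq> {1..n} \<and> (\<forall>x \<in> {1..k-2}. i x < a) \<and>
     (\<forall>x \<in> {1..k-2}. \<forall>y \<in> {1..k-2}. q x y \<longrightarrow> \<pi> (i x) < \<pi> (i y)) \<and>
     (\<forall>x \<in> {1..k-2}. q x k \<longrightarrow> \<pi> (i x) < v)"

definition prefix_occurrence ::
  "nat \<Rightarrow> (nat \<Rightarrow> nat \<Rightarrow> bool) \<Rightarrow> nat \<Rightarrow> (nat \<Rightarrow> nat) \<Rightarrow> nat \<Rightarrow> nat \<Rightarrow> bool"
where
  "prefix_occurrence k q n \<pi> a v \<longleftrightarrow> (\<exists>i. prefix_embedding k q n \<pi> a v i)"

lemma prefix_occurrence_mono:
  assumes "prefix_occurrence k q n \<pi> a v" "a \<le> a'" "v \<le> v'"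
  shows "prefix_occurrence k q n \<pi> a' v'"
proof -
  obtain i where "prefix_embedding k q n \<pi> a v i"
    using assms(1) by (auto simp: prefix_occurrence_def)
  then have "prefix_embedding k q n \<pi> a' v' i"
    using assms(2,3) by (auto simp: prefix_embedding_def intro: less_le_trans)
  then show ?thesis by (auto simp: prefix_occurrence_def)
qed

lemma prefix_occurrence_cong:
  assumes "\<forall>x \<in> {1..k-2}. \<forall>y \<in> {1..k-2}. q x y \<longleftrightarrow> q' x y"
    and "\<forall>x \<in> {1..k-2}. q x k \<longleftrightarrow> q' x k"
  shows "prefix_occurrence k q n = prefix_occurrence k q' n"
  using assms unfolding prefix_occurrence_def prefix_embedding_def by (intro ext) auto

lemma prefix_embedding_cong:
  assumes "\<forall>x \<in> {1..k-2}. \<forall>y \<in> {1..k-2}. q x y \<longrightarrow> q x k \<and> q y k"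
    and "\<forall>x \<in> {1..k-2}. q x k \<longrightarrow> \<tau> (i x) = \<pi> (i x)"
  shows "prefix_embedding k q n \<tau> a v i \<longleftrightarrow> prefix_embedding k q n \<pi> a v i"
proof -
  have "(\<forall>x \<in> {1..k-2}. \<forall>y \<in> {1..k-2}. q x y \<longrightarrow> \<tau> (i x) < \<tau> (i y)) \<longleftrightarrow>
        (\<forall>x \<in> {1..k-2}. \<forall>y \<in> {1..k-2}. q x y \<longrightarrow> \<pi> (i x) < \<pi> (i y))"
    using assms by auto
  moreover have "(\<forall>x \<in> {1..k-2}. q x k \<longrightarrow> \<tau> (i x) < v) \<longleftrightarrow>
                 (\<forall>x \<in> {1..k-2}. q x k \<longrightarrow> \<pi> (i x) < v)"
    using assms(2) by auto
  ultimately show ?thesis unfolding prefix_embedding_def by simp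
qed

lemma prefix_embedding_extend:
  assumes "prefix_embedding k q n \<pi> a v i" "1 \<le> a" "a < b" "b \<le> n"
  shows "strict_mono_on {1..k} (i(k-1 := a, k := b))"
    and "(i(k-1 := a, k := b)) ` {1..k} \<subseteq> {1..n}"
proof -
  have sm: "strict_mono_on {1..k-2} i" and im: "\<forall>x \<in> {1..k-2}. i x \<in> {1..n}"
    and below: "\<forall>x \<in> {1..k-2}. i x < a"
    using assms(1) by (auto simp: prefix_embedding_def)
  show "strict_mono_on {1..k} (i(k-1 := a, k := b))"
  proof (rule strict_mono_onI)
    fix r s assume "r \<in> {1..k}" "s \<in> {1..k}" "r < s"
    then consider "r \<in> {1..k-2}" "s \<in> {1..k-2}" | "r \<in> {1..k-2}" "s \<in> {k-1, k}" | "r = k-1" "s = k"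
      by fastforce
    then show "(i(k-1 := a, k := b)) r < (i(k-1 := a, k := b)) s"
    proof cases
      case 1
      then show ?thesis using strict_mono_onD[OF sm] \<open>r < s\<close> by auto
    next
      case 2
      then have "i r < a" using below by simp
      with 2 show ?thesis using \<open>a < b\<close> by auto
    next
      case 3
      then show ?thesis using \<open>a < b\<close> \<open>r \<in> {1..k}\<close> by auto
    qed
  qed
  show "(i(k-1 := a, k := b)) ` {1..k} \<subseteq> {1..n}"
  proof (rule image_subsetI)
    fix x assume "x \<in> {1..k}"
    then consider "x \<in> {1..k-2}" | "x = k-1" | "x = k" by fastforce
    then show "(i(k-1 := a, k := b)) x \<in> {1..n}"
      by cases (use im assms(2-4) in auto)
  qed
qed

lemma pop_relation_cases:
  assumes "is_pop k q"
    and top: "\<forall>x \<in> {1..k-2}. \<forall>y. q x y \<or> q y x \<longrightarrow> q x (k-1) \<and> q x k"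
    and "q j m"
  shows "(j \<in> {1..k-2} \<and> m \<in> {1..k-2}) \<or> (j \<in> {1..k-2} \<and> q j k \<and> m \<in> {k-1, k}) \<or>
    (j \<in> {k-1, k} \<and> m \<in> {k-1, k} \<and> j \<noteq> m)"
proof -
  have irrefl: "\<not> q x x" and trans: "q x y \<Longrightarrow> q y z \<Longrightarrow> q x z"
    and dom: "j \<in> {1..k}" "m \<in> {1..k}" for x y z
    using assms(1,3) unfolding is_pop_def by blast+
  have "m \<notin> {1..k-2}" if "j \<in> {k-1, k}"
  proof
    assume "m \<in> {1..k-2}"
    then have "q m j" using top \<open>q j m\<close> that by blast
    with \<open>q j m\<close> show False using irrefl trans by blast
  qed
  moreover have "j \<noteq> m" using irrefl \<open>q j m\<close> by blast
  ultimately show ?thesis using dom top \<open>q j m\<close> by fastforce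
qed

lemma prefix_occurrence_if_pop_contains:
  assumes "2 \<le> k"
    and top: "\<forall>x \<in> {1..k-2}. \<forall>y. q x y \<or> q y x \<longrightarrow> q x (k-1) \<and> q x k"
    and "pop_contains n \<pi> k q"
  obtains a b where "1 \<le> a" "a < b" "b \<le> n" "prefix_occurrence k q n \<pi> a (min (\<pi> a) (\<pi> b))"
    "q (k-1) k \<longrightarrow> \<pi> a < \<pi> b" "q k (k-1) \<longrightarrow> \<pi> b < \<pi> a"
proof -
  obtain i where sm: "strict_mono_on {1..k} i" and im: "i ` {1..k} \<subseteq> {1..n}"
    and rel: "\<forall>j m. q j m \<longrightarrow> \<pi> (i j) < \<pi> (i m)"
    using assms(3) unfolding pop_contains_def by blast
  have core: "{1..k-2} \<subseteq> {1..k}" and last: "k-1 \<in> {1..k}" "k \<in> {1..k}"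
    using assms(1) by auto
  have below: "i x < i (k-1)" if "x \<in> {1..k-2}" for x
    using strict_mono_onD[OF sm] that last by auto
  have "i ` {1..k-2} \<subseteq> {1..n}" using im core by blast
  then have "prefix_embedding k q n \<pi> (i (k-1)) (min (\<pi> (i (k-1))) (\<pi> (i k))) i"
    unfolding prefix_embedding_def
    using monotone_on_subset[OF sm core] below rel top by auto
  moreover have "i (k-1) \<in> {1..n}" "i k \<in> {1..n}"
    using im last by blast+
  moreover have "i (k-1) < i k"
    using strict_mono_onD[OF sm last] assms(1) by simp
  ultimately show ?thesis
    using that rel by (auto simp: prefix_occurrence_def)
qed

lemma pop_contains_if_prefix_occurrence:
  assumes "2 \<le> k" "is_pop k q"
    and top: "\<forall>x \<in> {1..k-2}. \<forall>y. q x y \<or> q y x \<longrightarrow> q x (k-1) \<and> q x k"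
    and ab: "1 \<le> a" "a < b" "b \<le> n" and "prefix_occurrence k q n \<pi> a (min (\<pi> a) (\<pi> b))"
    and top_order: "q (k-1) k \<longrightarrow> \<pi> a < \<pi> b" "q k (k-1) \<longrightarrow> \<pi> b < \<pi> a"
  shows "pop_contains n \<pi> k q"
proof -
  obtain i0 where emb: "prefix_embedding k q n \<pi> a (min (\<pi> a) (\<pi> b)) i0"
    using assms(7) unfolding prefix_occurrence_def by blast
  define i where "i = i0(k-1 := a, k := b)"
  have i: "i (k-1) = a" "i k = b" "\<forall>x \<in> {1..k-2}. i x = i0 x"
    using assms(1) by (auto simp: i_def)
  have "\<pi> (i j) < \<pi> (i m)" if qjm: "q j m" for j m
  proof -
    consider (core) "j \<in> {1..k-2}" "m \<in> {1..k-2}"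
      | (below_top) "j \<in> {1..k-2}" "q j k" "m \<in> {k-1, k}"
      | (top_pair) "j \<in> {k-1, k}" "m \<in> {k-1, k}" "j \<noteq> m"
      using pop_relation_cases[OF assms(2) top qjm] by blast
    then show ?thesis
    proof cases
      case core
      then show ?thesis using qjm i emb by (simp add: prefix_embedding_def)
    next
      case below_top
      then show ?thesis using i emb by (auto simp: prefix_embedding_def)
    next
      case top_pair
      then show ?thesis using qjm i top_order by auto
    qed
  qed
  then show ?thesis
    using prefix_embedding_extend[OF emb ab] unfolding pop_contains_def i_def by blast
qed

lemma pop_contains_iff_prefix_occurrence:
  assumes "2 \<le> k" "is_pop k q"
    and "\<forall>x \<in> {1..k-2}. \<forall>y. q x y \<or> q y x \<longrightarrow> q x (k-1) \<and> q x k"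
  shows "pop_contains n \<pi> k q \<longleftrightarrow>
    (\<exists>a b. 1 \<le> a \<and> a < b \<and> b \<le> n \<and> prefix_occurrence k q n \<pi> a (min (\<pi> a) (\<pi> b)) \<and>
      (q (k-1) k \<longrightarrow> \<pi> a < \<pi> b) \<and> (q k (k-1) \<longrightarrow> \<pi> b < \<pi> a))"
proof
  assume "pop_contains n \<pi> k q"
  then show "\<exists>a b. 1 \<le> a \<and> a < b \<and> b \<le> n \<and> prefix_occurrence k q n \<pi> a (min (\<pi> a) (\<pi> b)) \<and>
      (q (k-1) k \<longrightarrow> \<pi> a < \<pi> b) \<and> (q k (k-1) \<longrightarrow> \<pi> b < \<pi> a)"
    by (rule prefix_occurrence_if_pop_contains[OF assms(1,3)]) blast
qed (use pop_contains_if_prefix_occurrence[OF assms] in blast)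

lemma related_not_isolated: "q x y \<Longrightarrow> x \<notin> isolated k q \<and> y \<notin> isolated k q"
  by (auto simp: isolated_def)

lemma related_below_top:
  assumes "\<forall>x \<in> {1..k-2} - isolated k q. q x (k-1) \<and> q x k"
  shows "\<forall>x \<in> {1..k-2}. \<forall>y. q x y \<or> q y x \<longrightarrow> q x (k-1) \<and> q x k"
  using assms related_not_isolated by blast

locale prefix_guard =
  fixes k :: nat and q :: "nat \<Rightarrow> nat \<Rightarrow> bool" and n :: nat
  assumes core_below_top: "\<forall>x \<in> {1..k-2}. \<forall>y \<in> {1..k-2}. q x y \<longrightarrow> q x k \<and> q y k"

sublocale prefix_guard \<subseteq> monotone_guard n "prefix_occurrence k q n"
  by unfold_locales (rule prefix_occurrence_mono)

context prefix_guard
begin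

lemma prefix_embedding_class_cong:
  assumes "\<tau> \<in> guard_class \<pi>" "i ` {1..k-2} \<subseteq> {1..n}"
    and "\<forall>x \<in> {1..k-2}. q x k \<longrightarrow> i x \<notin> active \<pi>"
  shows "prefix_embedding k q n \<tau> a v i \<longleftrightarrow> prefix_embedding k q n \<pi> a v i"
proof (rule prefix_embedding_cong[OF core_below_top])
  show "\<forall>x \<in> {1..k-2}. q x k \<longrightarrow> \<tau> (i x) = \<pi> (i x)"
    using assms by (auto simp: guard_class_def)
qed

lemma prefix_occurrence_from_class_member:
  assumes \<tau>: "\<tau> \<in> guard_class \<pi>" and "prefix_occurrence k q n \<tau> a v"
  shows "prefix_occurrence k q n \<pi> a v"
proof -
  obtain i where i: "prefix_embedding k q n \<tau> a v i"
    using assms(2) by (auto simp: prefix_occurrence_def)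
  show ?thesis
  proof (cases "\<exists>x \<in> {1..k-2}. q x k \<and> i x \<in> active \<pi>")
    case True
    then obtain x where x: "x \<in> {1..k-2}" "q x k" "i x \<in> active \<pi>" by blast
    then have "prefix_occurrence k q n \<pi> (i x) (\<tau> (i x))"
      using \<tau> by (simp add: guard_class_def)
    moreover have "i x \<le> a" "\<tau> (i x) \<le> v"
      using i x by (auto simp: prefix_embedding_def less_imp_le)
    ultimately show ?thesis by (rule prefix_occurrence_mono)
  next
    case False
    then have "\<forall>x \<in> {1..k-2}. q x k \<longrightarrow> i x \<notin> active \<pi>" by blast
    moreover have "i ` {1..k-2} \<subseteq> {1..n}" using i by (simp add: prefix_embedding_def)
    ultimately have "prefix_embedding k q n \<pi> a v i"
      using i prefix_embedding_class_cong[OF \<tau>] by blast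
    then show ?thesis by (auto simp: prefix_occurrence_def)
  qed
qed

lemma prefix_occurrence_to_class_member:
  assumes \<tau>: "\<tau> \<in> guard_class \<pi>"
  shows "prefix_occurrence k q n \<pi> a v \<Longrightarrow> prefix_occurrence k q n \<tau> a v"
  \<comment> \<open>A witness through an active position i x reduces the threshold v to \<pi> (i x) < v.\<close>
proof (induction v rule: less_induct)
  case (less v)
  obtain i where i: "prefix_embedding k q n \<pi> a v i"
    using less.prems by (auto simp: prefix_occurrence_def)
  show ?case
  proof (cases "\<exists>x \<in> {1..k-2}. q x k \<and> i x \<in> active \<pi>")
    case True
    then obtain x where x: "x \<in> {1..k-2}" "q x k" "i x \<in> active \<pi>" by blast
    then have "prefix_occurrence k q n \<pi> (i x) (\<pi> (i x))"
      by (simp add: active_def)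
    moreover have "i x \<le> a" and smaller: "\<pi> (i x) < v"
      using i x by (auto simp: prefix_embedding_def less_imp_le)
    ultimately have "prefix_occurrence k q n \<pi> a (\<pi> (i x))"
      using prefix_occurrence_mono by blast
    then have "prefix_occurrence k q n \<tau> a (\<pi> (i x))"
      using less.IH[OF smaller] by blast
    then show ?thesis using prefix_occurrence_mono smaller less_imp_le by blast
  next
    case False
    then have "\<forall>x \<in> {1..k-2}. q x k \<longrightarrow> i x \<notin> active \<pi>" by blast
    moreover have "i ` {1..k-2} \<subseteq> {1..n}" using i by (simp add: prefix_embedding_def)
    ultimately have "prefix_embedding k q n \<tau> a v i"
      using i prefix_embedding_class_cong[OF \<tau>] by blast
    then show ?thesis by (auto simp: prefix_occurrence_def)
  qed
qed

lemma pop_contains_iff_guarded_inversion: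
  assumes "2 \<le> k" "is_pop k q"
    and "\<forall>x \<in> {1..k-2}. \<forall>y. q x y \<or> q y x \<longrightarrow> q x (k-1) \<and> q x k"
    and "q k (k-1)"
  shows "pop_contains n \<pi> k q \<longleftrightarrow> guarded_inversion \<pi>"
proof -
  have "\<not> q (k-1) k" using assms(2,4) unfolding is_pop_def by blast
  then show ?thesis
    using pop_contains_iff_prefix_occurrence[OF assms(1-3)] assms(4)
    by (auto simp: guarded_inversion_def guarded_pair_def)
qed

lemma pop_contains_iff_guarded_ascent:
  assumes "2 \<le> k" "is_pop k q'"
    and "\<forall>x \<in> {1..k-2}. \<forall>y. q' x y \<or> q' y x \<longrightarrow> q' x (k-1) \<and> q' x k"
    and "q' (k-1) k" and "prefix_occurrence k q' n = prefix_occurrence k q n"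
  shows "pop_contains n \<pi> k q' \<longleftrightarrow> guarded_ascent \<pi>"
proof -
  have "\<not> q' k (k-1)" using assms(2,4) unfolding is_pop_def by blast
  then show ?thesis
    using pop_contains_iff_prefix_occurrence[OF assms(1-3)] assms(4,5)
    by (auto simp: guarded_ascent_def guarded_pair_def)
qed

end

sublocale prefix_guard \<subseteq> class_invariant_guard n "prefix_occurrence k q n"
proof unfold_locales
  fix \<tau> \<pi> assume \<tau>: "\<tau> \<in> guard_class \<pi>"
  show "prefix_occurrence k q n \<tau> = prefix_occurrence k q n \<pi>"
    by (intro ext iffI)
      (erule prefix_occurrence_from_class_member[OF \<tau>], erule prefix_occurrence_to_class_member[OF \<tau>])
qed

theorem lemma2p2:
  fixes k :: nat and p p' :: "nat \<Rightarrow> nat \<Rightarrow> bool" and I :: "nat set"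
  assumes "k \<ge> 3"
    and "is_pop k p" and "is_pop k p'"
    and "isolated k p = I" and "isolated k p' = I"
    and "k - 2 \<notin> I" and "k - 1 \<notin> I" and "k \<notin> I"
    and "\<forall>x \<in> {1..k-2} - I. p x (k - 1) \<and> p x k"
    and "\<forall>x \<in> {1..k-2} - I. p' x (k - 1) \<and> p' x k"
    and "\<forall>a \<in> {1..k-2} - I. \<forall>b \<in> {1..k-2} - I. p a b \<longleftrightarrow> p' a b"
    and "p k (k - 1)" and "p' (k - 1) k"
  shows "wilf_equiv k p p'"
proof -
  have top: "\<forall>x \<in> {1..k-2}. \<forall>y. p x y \<or> p y x \<longrightarrow> p x (k-1) \<and> p x k"
    using assms(4,9) by (intro related_below_top) blast
  have top': "\<forall>x \<in> {1..k-2}. \<forall>y. p' x y \<or> p' y x \<longrightarrow> p' x (k-1) \<and> p' x k"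
    using assms(5,10) by (intro related_below_top) blast
  have same_prefix: "prefix_occurrence k p' n = prefix_occurrence k p n" for n
  proof (rule prefix_occurrence_cong)
    note related = related_not_isolated[of p _ _ k, unfolded assms(4)]
      and related' = related_not_isolated[of p' _ _ k, unfolded assms(5)]
    show "\<forall>x \<in> {1..k-2}. \<forall>y \<in> {1..k-2}. p' x y \<longleftrightarrow> p x y"
      using assms(11) related related' by blast
    show "\<forall>x \<in> {1..k-2}. p' x k \<longleftrightarrow> p x k"
      using assms(9,10) related related' by blast
  qed
  show ?thesis
    unfolding wilf_equiv_def
  proof (intro allI impI)
    fix n :: nat
    interpret prefix_guard k p n
      using top by unfold_locales blast
    have "2 \<le> k" using assms(1) by simp
    then show "card (pop_avoiders n k p) = card (pop_avoiders n k p')"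
      using card_no_guarded_inversion_eq_card_no_guarded_ascent
        pop_contains_iff_guarded_inversion[OF _ assms(2) top assms(12)]
        pop_contains_iff_guarded_ascent[OF _ assms(3) top' assms(13) same_prefix]
      unfolding pop_avoiders_def by simp
  qed
qed

end
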